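(* Let $X$ be a compact Hausdorff space, $T:X\to X$ a covering map, and $\widetilde{\psi}$ the faithful representation of $C(X)\rtimes_{\alpha,\mathcal{L}}\mathbb{N}$ on $\widetilde{H}$ with $\widetilde{\psi}(f)=\widetilde{M}_f$, $\widetilde{\psi}(s)=\widetilde{S}$. Then for every $b\in C(X)\rtimes_{\alpha,\mathcal{L}}\mathbb{N}$: (1) $\langle\widetilde{\psi}(b)e_{(x,n)},e_{(x,n)}\rangle=G(b)(x)$ for all $(x,n)\in X\times\mathbb{Z}$; (2) $b\in C(X)$ if and only if $\langle\widetilde{\psi}(b)e_{(x,m)},e_{(y,n)}\rangle=0$ for all $(x,m),(y,n)\in X\times\mathbb{Z}$ with $(x,m)\neq(y,n)$; (3) if $(x,m),(y,n)\in X\times\mathbb{Z}$ and $\langle\widetilde{\psi}(b)e_{(x,m)},e_{(y,n)}\rangle\neq0$, then there exist $k,l\in\mathbb{N}$ with $k+m=l+n$ and $T^l(x)=T^k(y)$, and there exist an open neighbourhood $U$ of $x$ and an open neighbourhood $V$ of $y$ such that whenever $x'\in U$, $y'\in V$ and $T^l(x')=T^k(y')$, one has $\langle\widetilde{\psi}(b)e_{(x',m)},e_{(y',n)}\rangle\neq0$.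
   Context: $T:X\to X$ is a covering map: continuous, surjective, and every point has an open neighbourhood $V$ with $T^{-1}(V)$ a disjoint union of open sets each mapped homeomorphically onto $V$ by $T$. Define $\alpha(f)=f\circ T$, $L_0(f)(x)=\sum_{y\in T^{-1}(\{x\})}f(y)$, $\mathcal{L}(f)=L_0(1_X)^{-1}L_0(f)$ on $C(X)$; put $\mathrm{ind}(E)=\alpha(L_0(1_X))$ and $I_k=\mathrm{ind}(E)\,\alpha(\mathrm{ind}(E))\cdots\alpha^{k-1}(\mathrm{ind}(E))$ for $k\ge1$, $I_0=1$. Choose a finite open cover $\{V_i\}_{i=1}^t$ of $X$ with $T|_{V_i}$ injective, a subordinate partition of unity $\{v_i\}$, and $u_i=(\alpha(L_0(1_X))v_i)^{1/2}$. $C(X)\rtimes_{\alpha,\mathcal{L}}\mathbb{N}$ is the universal $C^*$-algebra generated by a unital copy of $C(X)$ and an isometry $s$ subject to $sf=\alpha(f)s$, $s^*fs=\mathcal{L}(f)$ ($f\in C(X)$), and $1=\sum_{i=1}^t u_iss^*u_i$; $C(X)$ is identified with its canonical image. $G: C(X)\rtimes_{\alpha,\mathcal{L}}\mathbb{N}\to C(X)$ denotes the conditional expectation (known to exist) with $G(fs^k(s^* )^lg)=\delta_{k,l}\,f I_k^{-1}g$ for $f,g\in C(X)$, $k,l\in\mathbb{N}$. $\widetilde{H}$ is the Hilbert space with orthonormal basis $(e_{(x,n)})_{(x,n)\in X\times\mathbb{Z}}$, $\widetilde{M}_fe_{(x,n)}=f(x)e_{(x,n)}$, and $\widetilde{S}e_{(x,n)}=(L_0(1_X)(x))^{-1/2}\sum_{y\in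 T^{-1}(\{x\})}e_{(y,n+1)}$. *)

theory Defs
  imports "HOL-Analysis.Analysis"
begin

definition covering_map :: "('a::topological_space \<Rightarrow> 'a) \<Rightarrow> bool" where
  "covering_map T \<longleftrightarrow> continuous_on UNIV T \<and> surj T \<and>
     (\<forall>x. \<exists>V. open V \<and> x \<in> V \<and>
        (\<exists>\<U>. (\<forall>U\<in>\<U>. open U) \<and> pairwise disjnt \<U> \<and> \<Union>\<U> = T -` V \<and>
              (\<forall>U\<in>\<U>. \<exists>g. homeomorphism U V T g)))"

definition L0one :: "('a \<Rightarrow> 'a) \<Rightarrow> 'a \<Rightarrow> real" where
  "L0one T x = real (card {y. T y = x})"

(* I_k = ind(E) alpha(ind(E)) ... alpha^{k-1}(ind(E)),  ind(E) = L0one T o T *)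
definition Ik :: "('a \<Rightarrow> 'a) \<Rightarrow> nat \<Rightarrow> 'a \<Rightarrow> real" where
  "Ik T k x = (\<Prod>j<k. L0one T ((T ^^ Suc j) x))"

definition ell2 :: "('a \<times> int \<Rightarrow> complex) set" where
  "ell2 = {v. (\<lambda>p. (cmod (v p))\<^sup>2) summable_on UNIV}"

definition l2norm :: "('a \<times> int \<Rightarrow> complex) \<Rightarrow> real" where
  "l2norm v = sqrt (\<Sum>\<^sub>\<infinity>p. (cmod (v p))\<^sup>2)"

(* orthonormal basis vector e_p; <w, e_q> = w q *)
definition basis_vec :: "'a \<times> int \<Rightarrow> ('a \<times> int \<Rightarrow> complex)" where
  "basis_vec p = (\<lambda>q. if q = p then 1 else 0)"

type_synonym 'a op = "('a \<times> int \<Rightarrow> complex) \<Rightarrow> ('a \<times> int \<Rightarrow> complex)"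

definition Mop :: "('a \<Rightarrow> complex) \<Rightarrow> 'a op" where
  "Mop f = (\<lambda>v p. f (fst p) * v p)"

(* \<tilde>S e_(x,n) = L0(1)(x)^{-1/2} \<Sum>_{T y = x} e_(y,n+1) *)
definition Sop :: "('a \<Rightarrow> 'a) \<Rightarrow> 'a op" where
  "Sop T = (\<lambda>v p. complex_of_real (1 / sqrt (L0one T (T (fst p)))) * v (T (fst p), snd p - 1))"

definition Sstar :: "('a \<Rightarrow> 'a) \<Rightarrow> 'a op" where
  "Sstar T = (\<lambda>v p. complex_of_real (1 / sqrt (L0one T (fst p))) *
                     (\<Sum>y\<in>{y. T y = fst p}. v (y, snd p + 1)))"

inductive_set alg0 :: "('a::topological_space \<Rightarrow> 'a) \<Rightarrow> 'a op set" for T where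
  mult: "continuous_on UNIV f \<Longrightarrow> Mop f \<in> alg0 T"
| S: "Sop T \<in> alg0 T"
| Sstar: "Sstar T \<in> alg0 T"
| add: "a \<in> alg0 T \<Longrightarrow> b \<in> alg0 T \<Longrightarrow> (\<lambda>v p. a v p + b v p) \<in> alg0 T"
| scale: "a \<in> alg0 T \<Longrightarrow> (\<lambda>v p. c * a v p) \<in> alg0 T"
| comp: "a \<in> alg0 T \<Longrightarrow> b \<in> alg0 T \<Longrightarrow> a \<circ> b \<in> alg0 T"

definition op_close :: "'a op \<Rightarrow> 'a op \<Rightarrow> real \<Rightarrow> bool" where
  "op_close a b eps \<longleftrightarrow> (\<forall>v\<in>ell2. (\<lambda>p. a v p - b v p) \<in> ell2 \<and>
                                  l2norm (\<lambda>p. a v p - b v p) \<le> eps * l2norm v)"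

(* \<tilde>\<psi>(C(X) \<rtimes> N): the norm closure of alg0, i.e. the C*-algebra generated by
   the \<tilde>M_f and \<tilde>S *)
definition crossed :: "('a::topological_space \<Rightarrow> 'a) \<Rightarrow> 'a op set" where
  "crossed T = {b. \<forall>eps>0. \<exists>a\<in>alg0 T. op_close b a eps}"

(* the conditional expectation G, transported along the faithful representation *)
definition is_cond_exp :: "('a::topological_space \<Rightarrow> 'a) \<Rightarrow> ('a op \<Rightarrow> 'a \<Rightarrow> complex) \<Rightarrow> bool" where
  "is_cond_exp T G \<longleftrightarrow>
     (\<forall>b\<in>crossed T. continuous_on UNIV (G b)) \<and>
     (\<forall>a\<in>crossed T. \<forall>b\<in>crossed T. G (\<lambda>v p. a v p + b v p) = (\<lambda>x. G a x + G b x)) \<and>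
     (\<forall>a\<in>crossed T. \<forall>c. G (\<lambda>v p. c * a v p) = (\<lambda>x. c * G a x)) \<and>
     (\<forall>a\<in>crossed T. \<forall>b\<in>crossed T. \<forall>eps\<ge>0. op_close a b eps \<longrightarrow>
         (\<forall>x. cmod (G a x - G b x) \<le> eps)) \<and>
     (\<forall>f g k l. continuous_on UNIV f \<longrightarrow> continuous_on UNIV g \<longrightarrow>
        G (Mop f \<circ> (Sop T ^^ k) \<circ> (Sstar T ^^ l) \<circ> Mop g) =
          (\<lambda>x. if k = l then f x * g x / complex_of_real (Ik T k x) else 0))"

end

theory Submission
  imports Defs
begin

text \<open>Every operator in the non-closed algebra \<open>alg0\<close> is a finite sum of monomials
  \<open>M\<^sub>f S\<^sup>k S\<^sup>*\<^sup>l M\<^sub>g\<close> with continuous \<open>f\<close>, \<open>g\<close>, because \<open>S\<^sup>* M\<^sub>u S = M\<^bsub>\<L> u\<^esub>\<close> and \<open>\<L>\<close> preserves continuity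
  for a covering map. The coefficient \<open>\<langle>M\<^sub>f S\<^sup>k S\<^sup>*\<^sup>l M\<^sub>g e(x, m), e(y, n)\<rangle>\<close> vanishes unless
  \<open>k + m = l + n\<close> and \<open>T\<^sup>l x = T\<^sup>k y\<close>, and is then a continuous function of \<open>(x, y)\<close>; on the diagonal
  it equals the conditional expectation. Such operators also depend on only finitely many
  coordinates at each point. All three statements pass to the norm closure, since a matrix
  coefficient moves by at most the operator-norm distance.\<close>

definition restrict0 :: "('a \<times> int) set \<Rightarrow> ('a \<times> int \<Rightarrow> complex) \<Rightarrow> 'a \<times> int \<Rightarrow> complex" where
  "restrict0 S v = (\<lambda>q. if q \<in> S then v q else 0)"

lemma ell2_coord_le_l2norm:
  assumes "v \<in> ell2"
  shows "cmod (v p) \<le> l2norm v"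
proof -
  have "(\<lambda>q. (cmod (v q))\<^sup>2) summable_on UNIV" using assms by (simp add: ell2_def)
  then have "(\<Sum>\<^sub>\<infinity>q\<in>{p}. (cmod (v q))\<^sup>2) \<le> (\<Sum>\<^sub>\<infinity>q. (cmod (v q))\<^sup>2)"
    by (intro infsum_mono_neutral) auto
  then have "sqrt ((cmod (v p))\<^sup>2) \<le> l2norm v"
    unfolding l2norm_def by (intro real_sqrt_le_mono) simp
  then show ?thesis by simp
qed

lemma restrict0_ell2:
  assumes "v \<in> ell2"
  shows "restrict0 S v \<in> ell2" and "l2norm (restrict0 S v) \<le> l2norm v"
proof -
  have v: "(\<lambda>q. (cmod (v q))\<^sup>2) summable_on UNIV" using assms by (simp add: ell2_def)
  have vS: "(\<lambda>q. (cmod (restrict0 S v q))\<^sup>2) summable_on UNIV"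
    by (rule summable_on_comparison_test[OF v]) (auto simp: restrict0_def)
  then show "restrict0 S v \<in> ell2" by (simp add: ell2_def)
  have "(\<Sum>\<^sub>\<infinity>q. (cmod (restrict0 S v q))\<^sup>2) \<le> (\<Sum>\<^sub>\<infinity>q. (cmod (v q))\<^sup>2)"
    by (rule infsum_mono[OF vS v]) (auto simp: restrict0_def)
  then show "l2norm (restrict0 S v) \<le> l2norm v" by (simp add: l2norm_def)
qed

lemma basis_vec_ell2: "basis_vec p \<in> ell2"
proof -
  have "(\<lambda>q. (cmod (basis_vec p q))\<^sup>2) summable_on UNIV \<longleftrightarrow>
      (\<lambda>q. (cmod (basis_vec p q))\<^sup>2) summable_on {p}"
    by (rule summable_on_cong_neutral) (auto simp: basis_vec_def)
  then show ?thesis by (simp add: ell2_def)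
qed

lemma l2norm_basis_vec: "l2norm (basis_vec p) = 1"
proof -
  have "(\<Sum>\<^sub>\<infinity>q. (cmod (basis_vec p q))\<^sup>2) = (\<Sum>\<^sub>\<infinity>q\<in>{p}. (cmod (basis_vec p q))\<^sup>2)"
    by (rule infsum_cong_neutral) (auto simp: basis_vec_def)
  then show ?thesis by (simp add: l2norm_def basis_vec_def)
qed

lemma op_close_apply:
  assumes "op_close b a e" and "v \<in> ell2"
  shows "cmod (b v p - a v p) \<le> e * l2norm v"
  using assms ell2_coord_le_l2norm[of "\<lambda>p. b v p - a v p" p] unfolding op_close_def by force

lemma op_close_basis_vec:
  assumes "op_close b a e"
  shows "cmod (b (basis_vec q) p - a (basis_vec q) p) \<le> e"
  using op_close_apply[OF assms basis_vec_ell2] by (simp add: l2norm_basis_vec)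

lemma zero_if_norm_le_epsilon:
  fixes z :: "'b::real_normed_vector"
  assumes "\<And>e. e > 0 \<Longrightarrow> norm z \<le> C * e"
  shows "z = 0"
proof -
  have "norm z \<le> 0 + e" if e: "e > 0" for e
  proof -
    have "norm z \<le> C * (e / (\<bar>C\<bar> + 1))" using assms[of "e / (\<bar>C\<bar> + 1)"] e by simp
    also have "\<dots> \<le> (\<bar>C\<bar> + 1) * (e / (\<bar>C\<bar> + 1))"
      using e by (intro mult_right_mono) auto
    finally show ?thesis by simp
  qed
  then show ?thesis using field_le_epsilon[of "norm z" 0] by simp
qed

subsection \<open>The generating operators\<close>

text \<open>The transfer operator \<open>\<L>\<close>; an empty or infinite fibre gives the junk value \<open>0\<close>.\<close>

definition transfer_op :: "('a \<Rightarrow> 'a) \<Rightarrow> ('a \<Rightarrow> complex) \<Rightarrow> 'a \<Rightarrow> complex" where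
  "transfer_op T u x = complex_of_real (1 / L0one T x) * (\<Sum>y | T y = x. u y)"

lemma Mop_Mop: "Mop f (Mop g v) = Mop (\<lambda>x. f x * g x) v"
  by (simp add: Mop_def fun_eq_iff mult.assoc)

lemma Sop_Mop: "Sop T (Mop g v) = Mop (g \<circ> T) (Sop T v)"
  by (simp add: Mop_def Sop_def fun_eq_iff mult.left_commute)

lemma Mop_Sstar: "Mop f (Sstar T v) = Sstar T (Mop (f \<circ> T) v)"
proof
  fix p :: "'a \<times> int"
  have "(\<Sum>y | T y = fst p. f (T y) * v (y, snd p + 1)) = (\<Sum>y | T y = fst p. f (fst p) * v (y, snd p + 1))"
    by (rule sum.cong) auto
  then show "Mop f (Sstar T v) p = Sstar T (Mop (f \<circ> T) v) p"
    by (simp add: Mop_def Sstar_def sum_distrib_left mult.left_commute)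
qed

lemma Sstar_Mop_Sop: "Sstar T (Mop u (Sop T v)) = Mop (transfer_op T u) v"
proof
  fix p :: "'a \<times> int"
  obtain x n where p: "p = (x, n)" by force
  define c where "c = complex_of_real (1 / sqrt (L0one T x))"
  have cc: "c * c = complex_of_real (1 / L0one T x)"
    unfolding c_def of_real_mult[symmetric] by (simp add: L0one_def real_sqrt_mult[symmetric])
  have "Sstar T (Mop u (Sop T v)) p = c * (\<Sum>y | T y = x. u y * (c * v (x, n)))"
    by (simp add: p Sstar_def Mop_def Sop_def c_def)
  also have "\<dots> = c * c * (\<Sum>y | T y = x. u y) * v (x, n)"
    by (simp add: sum_distrib_left sum_distrib_right mult_ac)
  finally show "Sstar T (Mop u (Sop T v)) p = Mop (transfer_op T u) v p"
    by (simp add: p cc Mop_def transfer_op_def)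
qed

lemma Sop_pow_Mop: "(Sop T ^^ k) (Mop g v) = Mop (g \<circ> (T ^^ k)) ((Sop T ^^ k) v)"
  by (induction k) (simp_all add: Sop_Mop comp_def funpow_swap1[of T])

lemma Mop_Sstar_pow: "Mop f ((Sstar T ^^ l) v) = (Sstar T ^^ l) (Mop (f \<circ> (T ^^ l)) v)"
  by (induction l arbitrary: f) (simp_all add: Mop_Sstar comp_def funpow_swap1[of T])

lemma Sstar_pow_Mop_Sop_pow:
  "(Sstar T ^^ j) (Mop u ((Sop T ^^ j) w)) = Mop ((transfer_op T ^^ j) u) w"
proof (induction j arbitrary: u w)
  case (Suc j)
  have "(Sstar T ^^ Suc j) (Mop u ((Sop T ^^ Suc j) w))
      = (Sstar T ^^ j) (Sstar T (Mop u (Sop T ((Sop T ^^ j) w))))"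
    by (simp add: funpow_swap1)
  also have "\<dots> = Mop ((transfer_op T ^^ j) (transfer_op T u)) w"
    by (simp add: Sstar_Mop_Sop Suc)
  finally show ?case by (simp add: funpow_swap1)
qed simp

subsection \<open>Local structure of a covering map\<close>

lemma covering_map_continuous: "covering_map T \<Longrightarrow> continuous_on UNIV T"
  by (simp add: covering_map_def)

lemma covering_map_continuous_funpow:
  assumes "covering_map T"
  shows "continuous_on UNIV (T ^^ n)"
proof (induction n)
  case (Suc n)
  have "continuous_on UNIV (T \<circ> (T ^^ n))"
    by (rule continuous_on_compose[OF Suc continuous_on_subset[OF covering_map_continuous[OF assms]]]) simp
  then show ?case by simp
qed (simp add: id_def)

lemma continuous_on_UNIV_local:
  assumes "\<And>x. \<exists>V. open V \<and> x \<in> V \<and> continuous_on V f"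
  shows "continuous_on UNIV f"
proof -
  obtain V where V: "\<forall>x. open (V x) \<and> x \<in> V x \<and> continuous_on (V x) f"
    using choice[of "\<lambda>x V. open V \<and> x \<in> V \<and> continuous_on V f"] assms by blast
  have "continuous_on (\<Union>x. V x) f" by (rule continuous_on_open_UN) (use V in auto)
  moreover have "(\<Union>x. V x) = UNIV" using V by blast
  ultimately show ?thesis by simp
qed

lemma covering_map_local_sections:
  fixes T :: "'a::topological_space \<Rightarrow> 'a"
  assumes "covering_map T"
  obtains V and \<U> :: "'a set set" and s where "open V" "a \<in> V" "\<And>U. U \<in> \<U> \<Longrightarrow> continuous_on V (s U)"
    and "\<And>x. x \<in> V \<Longrightarrow> bij_betw (\<lambda>U. s U x) \<U> {y. T y = x}"
proof -
  obtain V \<U> where V: "open V" "a \<in> V" "pairwise disjnt \<U>" "\<Union>\<U> = T -` V"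
    and hom: "\<forall>U\<in>\<U>. \<exists>g. homeomorphism U V T g"
    using assms[unfolded covering_map_def, THEN conjunct2, THEN conjunct2, rule_format, of a]
    by (elim exE conjE) (rule that)
  obtain s where s: "\<forall>U\<in>\<U>. homeomorphism U V T (s U)" using bchoice[OF hom] by blast
  have s_in: "s U y \<in> U" if "U \<in> \<U>" "y \<in> V" for U y
    using s that unfolding homeomorphism_def by blast
  have T_s: "T (s U y) = y" if "U \<in> \<U>" "y \<in> V" for U y
    using s that unfolding homeomorphism_def by blast
  have s_T: "s U (T y) = y" if "U \<in> \<U>" "y \<in> U" for U y
    using s that unfolding homeomorphism_def by blast
  have s_cont: "continuous_on V (s U)" if "U \<in> \<U>" for U
    using s that unfolding homeomorphism_def by blast
  have bij: "bij_betw (\<lambda>U. s U x) \<U> {y. T y = x}" if x: "x \<in> V" for x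
  proof (rule bij_betwI')
    fix U1 U2 assume U: "U1 \<in> \<U>" "U2 \<in> \<U>"
    have m: "s U1 x \<in> U1" "s U2 x \<in> U2" using s_in U x by auto
    show "(s U1 x = s U2 x) = (U1 = U2)"
    proof
      assume "s U1 x = s U2 x"
      then have "\<not> disjnt U1 U2" using m unfolding disjnt_def by auto
      then show "U1 = U2" using V(3) U unfolding pairwise_def by blast
    qed simp
  next
    fix U assume "U \<in> \<U>"
    then show "s U x \<in> {y. T y = x}" using T_s x by auto
  next
    fix y assume y: "y \<in> {y. T y = x}"
    then have "y \<in> \<Union>\<U>" using V(4) x by auto
    then obtain U where U: "U \<in> \<U>" "y \<in> U" by blast
    then have "s U (T y) = y" using s_T by blast
    then show "\<exists>U\<in>\<U>. y = s U x" using U y by auto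
  qed
  show thesis by (rule that[OF V(1,2) s_cont bij])
qed

definition locally_const :: "('a::topological_space \<Rightarrow> 'b) \<Rightarrow> bool" where
  "locally_const h \<longleftrightarrow> (\<forall>x. \<exists>V. open V \<and> x \<in> V \<and> (\<forall>x'\<in>V. h x' = h x))"

lemma locally_const_continuous:
  fixes h :: "'a::topological_space \<Rightarrow> 'b::topological_space"
  assumes "locally_const h"
  shows "continuous_on UNIV h"
proof (rule continuous_on_UNIV_local)
  fix x
  obtain V where V: "open V" "x \<in> V" "\<forall>x'\<in>V. h x' = h x"
    using assms unfolding locally_const_def by blast
  have "continuous_on V h"
    by (rule continuous_on_eq[OF continuous_on_const[of V "h x"]]) (metis V(3))
  with V show "\<exists>V. open V \<and> x \<in> V \<and> continuous_on V h" by blast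
qed

lemma locally_const_combine:
  assumes "locally_const h1" "locally_const h2"
  shows "locally_const (\<lambda>x. F (h1 x) (h2 x))"
  unfolding locally_const_def
proof
  fix x
  obtain V1 where V1: "open V1" "x \<in> V1" "\<forall>x'\<in>V1. h1 x' = h1 x"
    using assms(1) unfolding locally_const_def by blast
  obtain V2 where V2: "open V2" "x \<in> V2" "\<forall>x'\<in>V2. h2 x' = h2 x"
    using assms(2) unfolding locally_const_def by blast
  have "F (h1 x') (h2 x') = F (h1 x) (h2 x)" if "x' \<in> V1 \<inter> V2" for x'
  proof -
    from that V1(3) V2(3) have "h1 x' = h1 x" "h2 x' = h2 x" by blast+
    then show ?thesis by (simp only:)
  qed
  moreover have "open (V1 \<inter> V2)" using V1(1) V2(1) by (rule open_Int)
  ultimately show "\<exists>V. open V \<and> x \<in> V \<and> (\<forall>x'\<in>V. F (h1 x') (h2 x') = F (h1 x) (h2 x))"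
    using V1(2) V2(2) by blast
qed

lemma locally_const_compose:
  "locally_const h \<Longrightarrow> locally_const (\<lambda>x. \<phi> (h x))"
  using locally_const_combine[of h h "\<lambda>u _. \<phi> u"] by simp

lemma locally_const_compose_continuous:
  assumes "locally_const h" "continuous_on UNIV f"
  shows "locally_const (\<lambda>x. h (f x))"
  unfolding locally_const_def
proof
  fix x
  obtain V where V: "open V" "f x \<in> V" "\<forall>x'\<in>V. h x' = h (f x)"
    using assms(1) unfolding locally_const_def by blast
  have "open (f -` V)" using open_vimage[OF V(1) assms(2)] .
  with V(2,3) show "\<exists>V. open V \<and> x \<in> V \<and> (\<forall>x'\<in>V. h (f x') = h (f x))"
    by blast
qed

lemma locally_const_L0one:
  fixes T :: "'a::topological_space \<Rightarrow> 'a"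
  assumes "covering_map T"
  shows "locally_const (L0one T)"
  unfolding locally_const_def
proof
  fix x0
  obtain V and \<U> :: "'a set set" and s where "open V" "x0 \<in> V" "\<And>U. U \<in> \<U> \<Longrightarrow> continuous_on V (s U)"
    and bij: "\<And>x. x \<in> V \<Longrightarrow> bij_betw (\<lambda>U. s U x) \<U> {y. T y = x}"
    using covering_map_local_sections[OF assms, where a = x0] by blast
  have "L0one T x = real (card \<U>)" if "x \<in> V" for x
    using bij_betw_same_card[OF bij[OF that]] by (simp add: L0one_def)
  then have "\<forall>x\<in>V. L0one T x = L0one T x0" using \<open>x0 \<in> V\<close> by simp
  with \<open>open V\<close> \<open>x0 \<in> V\<close> show "\<exists>V. open V \<and> x0 \<in> V \<and> (\<forall>x\<in>V. L0one T x = L0one T x0)"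
    by blast
qed

lemma locally_const_Ik:
  assumes "covering_map T"
  shows "locally_const (Ik T k)"
proof (induction k)
  case 0
  show ?case by (auto simp: locally_const_def Ik_def intro!: exI[of _ UNIV])
next
  case (Suc k)
  have "locally_const (\<lambda>x. L0one T ((T ^^ Suc k) x))"
    using locally_const_compose_continuous[OF locally_const_L0one covering_map_continuous_funpow] assms
    by blast
  from locally_const_combine[OF Suc this, of "(*)"] show ?case
    by (simp add: Ik_def)
qed

lemma continuous_on_transfer_op:
  fixes T :: "'a::topological_space \<Rightarrow> 'a"
  assumes "covering_map T" "continuous_on UNIV u"
  shows "continuous_on UNIV (transfer_op T u)"
proof (rule continuous_on_UNIV_local)
  fix x0
  obtain V and \<U> :: "'a set set" and s where V: "open V" "x0 \<in> V"
    and s: "\<And>U. U \<in> \<U> \<Longrightarrow> continuous_on V (s U)"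
    and bij: "\<And>x. x \<in> V \<Longrightarrow> bij_betw (\<lambda>U. s U x) \<U> {y. T y = x}"
    using covering_map_local_sections[OF assms(1), where a = x0] by blast
  have "transfer_op T u x = complex_of_real (1 / real (card \<U>)) * (\<Sum>U\<in>\<U>. u (s U x))"
    if "x \<in> V" for x
    using bij_betw_same_card[OF bij[OF that]] sum.reindex_bij_betw[OF bij[OF that], of u]
    by (simp add: transfer_op_def L0one_def)
  moreover have "continuous_on V (\<lambda>x. complex_of_real (1 / real (card \<U>)) * (\<Sum>U\<in>\<U>. u (s U x)))"
    by (intro continuous_intros continuous_on_compose2[OF assms(2) s]) auto
  ultimately have "continuous_on V (transfer_op T u)"
    using continuous_on_eq by force
  with V show "\<exists>V. open V \<and> x0 \<in> V \<and> continuous_on V (transfer_op T u)" by blast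
qed

lemma continuous_on_transfer_op_funpow:
  "covering_map T \<Longrightarrow> continuous_on UNIV u \<Longrightarrow> continuous_on UNIV ((transfer_op T ^^ j) u)"
  by (induction j) (simp_all add: continuous_on_transfer_op)

definition linear_op :: "'a op \<Rightarrow> bool" where
  "linear_op a \<longleftrightarrow> (\<forall>v w. a (\<lambda>p. v p + w p) = (\<lambda>p. a v p + a w p)) \<and>
                    (\<forall>c v. a (\<lambda>p. c * v p) = (\<lambda>p. c * a v p))"

lemma linear_op_Mop: "linear_op (Mop f)"
  by (simp add: linear_op_def Mop_def fun_eq_iff algebra_simps)

lemma linear_op_Sop: "linear_op (Sop T)"
  by (simp add: linear_op_def Sop_def fun_eq_iff add_divide_distrib)

lemma linear_op_Sstar: "linear_op (Sstar T)"
  by (simp add: linear_op_def Sstar_def fun_eq_iff add_divide_distrib sum.distrib sum_distrib_left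
      times_divide_eq_right)

lemma linear_op_comp: "linear_op a \<Longrightarrow> linear_op b \<Longrightarrow> linear_op (a \<circ> b)"
  by (simp add: linear_op_def)

lemma linear_op_funpow: "linear_op a \<Longrightarrow> linear_op (a ^^ n)"
  by (induction n) (auto simp: linear_op_def)

lemma linear_op_add: "linear_op a \<Longrightarrow> linear_op b \<Longrightarrow> linear_op (\<lambda>v p. a v p + b v p)"
  by (simp add: linear_op_def fun_eq_iff algebra_simps)

lemma linear_op_scale: "linear_op a \<Longrightarrow> linear_op (\<lambda>v p. c * a v p)"
  by (simp add: linear_op_def fun_eq_iff algebra_simps)

lemma linear_op_alg0: "a \<in> alg0 T \<Longrightarrow> linear_op a"
  by (induction rule: alg0.induct)
    (auto intro: linear_op_Mop linear_op_Sop linear_op_Sstar linear_op_add linear_op_scale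
       linear_op_comp[unfolded comp_def])

lemma linear_op_zero:
  assumes "linear_op a"
  shows "a (\<lambda>p. 0) = (\<lambda>p. 0)"
proof -
  have "\<forall>c v. a (\<lambda>p. c * v p) = (\<lambda>p. c * a v p)" using assms unfolding linear_op_def by blast
  from spec[OF spec[OF this, of 0], of "\<lambda>p. 0"] show ?thesis by simp
qed

lemma linear_op_sum_list:
  "linear_op a \<Longrightarrow> a (\<lambda>p. \<Sum>i\<leftarrow>xs. h i p) = (\<lambda>p. \<Sum>i\<leftarrow>xs. a (h i) p)"
  by (induction xs) (simp_all add: linear_op_zero, simp add: linear_op_def)

lemma linear_op_sum:
  assumes "linear_op a" "finite S"
  shows "a (\<lambda>p. \<Sum>i\<in>S. h i p) = (\<lambda>p. \<Sum>i\<in>S. a (h i) p)"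
  using assms(2)
proof (induction S rule: finite_induct)
  case empty
  show ?case using linear_op_zero[OF assms(1)] by simp
next
  case (insert i S)
  then show ?case using assms(1) by (simp add: linear_op_def)
qed

lemma linear_op_restrict0:
  assumes "linear_op a" "finite S"
  shows "a (restrict0 S v) p = (\<Sum>q\<in>S. v q * a (basis_vec q) p)"
proof -
  have "(\<Sum>q\<in>S. v q * basis_vec q r) = restrict0 S v r" for r
  proof -
    have "(\<Sum>q\<in>S. v q * basis_vec q r) = (\<Sum>q\<in>S. if r = q then v q else 0)"
      by (rule sum.cong) (auto simp: basis_vec_def)
    also have "\<dots> = restrict0 S v r" using assms(2) by (simp add: restrict0_def)
    finally show ?thesis .
  qed
  then have "restrict0 S v = (\<lambda>r. \<Sum>q\<in>S. v q * basis_vec q r)" by (simp add: fun_eq_iff)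
  then show ?thesis using assms linear_op_sum[OF assms] by (simp add: linear_op_def)
qed

subsection \<open>Monomials and the normal form of \<open>alg0\<close>\<close>

datatype 'a monomial = Monomial (mleft: "'a \<Rightarrow> complex") (s_deg: nat) (sstar_deg: nat) (mright: "'a \<Rightarrow> complex")

fun mono_op :: "('a \<Rightarrow> 'a) \<Rightarrow> 'a monomial \<Rightarrow> 'a op" where
  "mono_op T (Monomial f k l g) = Mop f \<circ> (Sop T ^^ k) \<circ> (Sstar T ^^ l) \<circ> Mop g"

text \<open>The middle factor \<open>S\<^sup>*\<^sup>l M\<^bsub>g h\<^esub> S\<^sup>k\<^sup>'\<close> collapses by \<open>S\<^sup>*\<^sup>j M\<^sub>u S\<^sup>j = M\<^bsub>\<L>\<^sup>j u\<^esub>\<close> with \<open>j = min l k'\<close>.\<close>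

fun mono_mult :: "('a \<Rightarrow> 'a) \<Rightarrow> 'a monomial \<Rightarrow> 'a monomial \<Rightarrow> 'a monomial" where
  "mono_mult T (Monomial f k l g) (Monomial h k' l' r) =
     (if l \<le> k'
      then Monomial (\<lambda>x. f x * (transfer_op T ^^ l) (\<lambda>y. g y * h y) ((T ^^ k) x)) (k + (k' - l)) l' r
      else Monomial f k (l - k' + l') (\<lambda>x. (transfer_op T ^^ k') (\<lambda>y. g y * h y) ((T ^^ l') x) * r x))"

fun mono_continuous :: "'a::topological_space monomial \<Rightarrow> bool" where
  "mono_continuous (Monomial f k l g) \<longleftrightarrow> continuous_on UNIV f \<and> continuous_on UNIV g"

definition mono_sum :: "('a \<Rightarrow> 'a) \<Rightarrow> 'a monomial list \<Rightarrow> 'a op" where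
  "mono_sum T Ms = (\<lambda>v p. \<Sum>M\<leftarrow>Ms. mono_op T M v p)"

lemma mono_op_mult: "mono_op T M1 (mono_op T M2 v) = mono_op T (mono_mult T M1 M2) v"
proof -
  obtain f k l g where M1: "M1 = Monomial f k l g" by (cases M1)
  obtain h k' l' r where M2: "M2 = Monomial h k' l' r" by (cases M2)
  define gh where "gh = (\<lambda>y. g y * h y)"
  define w where "w = (Sstar T ^^ l') (Mop r v)"
  have lhs: "mono_op T M1 (mono_op T M2 v) = Mop f ((Sop T ^^ k) ((Sstar T ^^ l) (Mop gh ((Sop T ^^ k') w))))"
    by (simp add: M1 M2 Mop_Mop gh_def w_def)
  show ?thesis
  proof (cases "l \<le> k'")
    case True
    have "(Sop T ^^ k') w = (Sop T ^^ l) ((Sop T ^^ (k' - l)) w)"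
      using True by (metis funpow_add le_add_diff_inverse comp_apply)
    then have "mono_op T M1 (mono_op T M2 v)
        = Mop f ((Sop T ^^ k) (Mop ((transfer_op T ^^ l) gh) ((Sop T ^^ (k' - l)) w)))"
      by (simp only: lhs Sstar_pow_Mop_Sop_pow)
    also have "\<dots> = Mop (\<lambda>x. f x * (transfer_op T ^^ l) gh ((T ^^ k) x)) ((Sop T ^^ (k + (k' - l))) w)"
      by (simp add: Sop_pow_Mop Mop_Mop funpow_add)
    finally show ?thesis using True by (simp add: M1 M2 gh_def w_def)
  next
    case False
    have "(Sstar T ^^ l) z = (Sstar T ^^ (l - k')) ((Sstar T ^^ k') z)" for z
      using False by (metis funpow_add le_add_diff_inverse2 nat_le_linear comp_apply)
    then have "mono_op T M1 (mono_op T M2 v)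
        = Mop f ((Sop T ^^ k) ((Sstar T ^^ (l - k')) (Mop ((transfer_op T ^^ k') gh) w)))"
      by (simp only: lhs Sstar_pow_Mop_Sop_pow)
    also have "\<dots> = Mop f ((Sop T ^^ k) ((Sstar T ^^ (l - k' + l'))
                       (Mop (\<lambda>x. (transfer_op T ^^ k') gh ((T ^^ l') x) * r x) v)))"
      by (simp add: w_def Mop_Sstar_pow Mop_Mop funpow_add)
    finally show ?thesis using False by (simp add: M1 M2 gh_def)
  qed
qed

lemma mono_continuous_mult:
  fixes T :: "'a::topological_space \<Rightarrow> 'a"
  assumes T: "covering_map T" and "mono_continuous M1" "mono_continuous M2"
  shows "mono_continuous (mono_mult T M1 M2)"
proof -
  obtain f k l g where M1: "M1 = Monomial f k l g" by (cases M1)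
  obtain h k' l' r where M2: "M2 = Monomial h k' l' r" by (cases M2)
  have "continuous_on UNIV (\<lambda>y. g y * h y)"
    using assms by (auto simp: M1 M2 intro: continuous_intros)
  then have "continuous_on UNIV (\<lambda>x. (transfer_op T ^^ j) (\<lambda>y. g y * h y) ((T ^^ i) x))" for i j
    using continuous_on_transfer_op_funpow[OF T] covering_map_continuous_funpow[OF T]
    by (auto intro: continuous_on_compose2)
  then show ?thesis using assms by (auto simp: M1 M2 intro!: continuous_intros)
qed

lemma linear_op_mono_op: "linear_op (mono_op T M)"
  by (cases M) (auto intro!: linear_op_comp linear_op_funpow linear_op_Mop linear_op_Sop linear_op_Sstar)

lemma mono_sum_comp:
  "mono_sum T Ms1 (mono_sum T Ms2 v) = mono_sum T [mono_mult T M1 M2. M1 \<leftarrow> Ms1, M2 \<leftarrow> Ms2] v"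
proof -
  have "mono_sum T Ms1 (mono_sum T Ms2 v) = (\<lambda>p. \<Sum>M1\<leftarrow>Ms1. \<Sum>M2\<leftarrow>Ms2. mono_op T M1 (mono_op T M2 v) p)"
    unfolding mono_sum_def by (simp add: linear_op_sum_list[OF linear_op_mono_op])
  also have "\<dots> = mono_sum T [mono_mult T M1 M2. M1 \<leftarrow> Ms1, M2 \<leftarrow> Ms2] v"
  proof -
    have "(\<Sum>M1\<leftarrow>Ms1. \<Sum>M2\<leftarrow>Ms2. F (mono_mult T M1 M2)) = (\<Sum>M\<leftarrow>[mono_mult T M1 M2. M1 \<leftarrow> Ms1, M2 \<leftarrow> Ms2]. F M)"
      for F :: "'a monomial \<Rightarrow> complex"
      by (induction Ms1) (simp_all add: comp_def)
    from this[of "\<lambda>M. mono_op T M v _"] show ?thesis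
      by (simp add: mono_sum_def mono_op_mult fun_eq_iff)
  qed
  finally show ?thesis .
qed

lemma alg0_normal_form:
  fixes T :: "'a::topological_space \<Rightarrow> 'a"
  assumes T: "covering_map T" and "a \<in> alg0 T"
  shows "\<exists>Ms. (\<forall>M\<in>set Ms. mono_continuous M) \<and> a = mono_sum T Ms"
  using assms(2)
proof (induction rule: alg0.induct)
  case (mult f)
  have "Mop f = mono_sum T [Monomial f 0 0 (\<lambda>_. 1)]" by (simp add: mono_sum_def Mop_def fun_eq_iff)
  then show ?case using mult by (intro exI[of _ "[Monomial f 0 0 (\<lambda>_. 1)]"]) simp
next
  case S
  have "Sop T = mono_sum T [Monomial (\<lambda>_. 1) 1 0 (\<lambda>_. 1)]" by (simp add: mono_sum_def Mop_def fun_eq_iff)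
  then show ?case by (intro exI[of _ "[Monomial (\<lambda>_. 1) 1 0 (\<lambda>_. 1)]"]) simp
next
  case Sstar
  have "Sstar T = mono_sum T [Monomial (\<lambda>_. 1) 0 1 (\<lambda>_. 1)]" by (simp add: mono_sum_def Mop_def fun_eq_iff)
  then show ?case by (intro exI[of _ "[Monomial (\<lambda>_. 1) 0 1 (\<lambda>_. 1)]"]) simp
next
  case (add a b)
  then obtain Ms1 Ms2 where "\<forall>M\<in>set Ms1. mono_continuous M" "a = mono_sum T Ms1"
    "\<forall>M\<in>set Ms2. mono_continuous M" "b = mono_sum T Ms2" by blast
  then show ?case by (intro exI[of _ "Ms1 @ Ms2"]) (auto simp: mono_sum_def)
next
  case (scale a c)
  then obtain Ms where Ms: "\<forall>M\<in>set Ms. mono_continuous M" "a = mono_sum T Ms" by blast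
  define scale :: "'a monomial \<Rightarrow> 'a monomial"
    where "scale M = Monomial (\<lambda>x. c * mleft M x) (s_deg M) (sstar_deg M) (mright M)" for M
  have "mono_op T (scale M) v p = c * mono_op T M v p" for M v p
    by (cases M) (simp add: scale_def Mop_def)
  then have "(\<lambda>v p. c * a v p) = mono_sum T (map scale Ms)"
    by (simp add: Ms(2) mono_sum_def sum_list_const_mult[symmetric] comp_def)
  moreover have "\<forall>M\<in>set (map scale Ms). mono_continuous M"
    using Ms(1) by (auto simp: scale_def intro!: continuous_intros elim!: mono_continuous.elims)
  ultimately show ?case by blast
next
  case (comp a b)
  then obtain Ms1 Ms2 where Ms: "\<forall>M\<in>set Ms1. mono_continuous M" "a = mono_sum T Ms1"
    "\<forall>M\<in>set Ms2. mono_continuous M" "b = mono_sum T Ms2" by blast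
  have "a \<circ> b = mono_sum T [mono_mult T M1 M2. M1 \<leftarrow> Ms1, M2 \<leftarrow> Ms2]"
    by (rule ext) (simp add: Ms(2,4) mono_sum_comp)
  moreover have "\<forall>M\<in>set [mono_mult T M1 M2. M1 \<leftarrow> Ms1, M2 \<leftarrow> Ms2]. mono_continuous M"
    using Ms(1,3) mono_continuous_mult[OF T] by auto
  ultimately show ?case by blast
qed

lemma mono_op_alg0: "mono_continuous M \<Longrightarrow> mono_op T M \<in> alg0 T"
proof (cases M)
  case (Monomial f k l g)
  have "(Sop T ^^ j) \<in> alg0 T" "(Sstar T ^^ j) \<in> alg0 T" for j
  proof (induction j)
    case 0
    have "Sop T ^^ 0 = Mop (\<lambda>_. 1)" "Sstar T ^^ 0 = Mop (\<lambda>_. 1)" by (simp_all add: fun_eq_iff Mop_def)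
    then show "(Sop T ^^ 0) \<in> alg0 T" "(Sstar T ^^ 0) \<in> alg0 T"
      using alg0.mult[of "\<lambda>_. 1" T] by simp_all
  next
    case (Suc j)
    then show "(Sop T ^^ Suc j) \<in> alg0 T" "(Sstar T ^^ Suc j) \<in> alg0 T"
      by (simp_all add: alg0.comp alg0.S alg0.Sstar)
  qed
  then show "mono_continuous M \<Longrightarrow> mono_op T M \<in> alg0 T"
    by (simp add: Monomial alg0.comp alg0.mult)
qed

lemma mono_sum_alg0: "\<forall>M\<in>set Ms. mono_continuous M \<Longrightarrow> mono_sum T Ms \<in> alg0 T"
proof (induction Ms)
  case Nil
  have "mono_sum T [] = (\<lambda>v p. 0 * Sop T v p)" by (simp add: mono_sum_def)
  then show ?case using alg0.scale[OF alg0.S, where c = 0] by simp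
next
  case (Cons M Ms)
  have "mono_sum T (M # Ms) = (\<lambda>v p. mono_op T M v p + mono_sum T Ms v p)" by (simp add: mono_sum_def)
  then show ?case using Cons by (simp add: alg0.add mono_op_alg0)
qed

subsection \<open>Matrix coefficients of monomials\<close>

definition point_vec :: "complex \<Rightarrow> 'a \<times> int \<Rightarrow> 'a \<times> int \<Rightarrow> complex" where
  "point_vec c p = (\<lambda>q. if q = p then c else 0)"

lemma basis_vec_eq_point_vec: "basis_vec p = point_vec 1 p"
  by (simp add: basis_vec_def point_vec_def)

lemma Mop_point_vec: "Mop g (point_vec c (x, m)) = point_vec (g x * c) (x, m)"
  by (auto simp: Mop_def point_vec_def fun_eq_iff)

lemma Ik_Suc: "Ik T (Suc l) x = Ik T l x * L0one T ((T ^^ Suc l) x)"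
  by (simp add: Ik_def)

lemma Ik_Suc_shift: "Ik T (Suc k) y = L0one T (T y) * Ik T k (T y)"
  unfolding Ik_def prod.lessThan_Suc_shift by (simp add: funpow_swap1)

lemma Ik_nonneg: "0 \<le> Ik T k x"
  by (simp add: Ik_def L0one_def prod_nonneg)

lemma Sstar_point_vec:
  "Sstar T (point_vec c (x, m)) = point_vec (c * complex_of_real (1 / sqrt (L0one T (T x)))) (T x, m - 1)"
proof
  fix p :: "'a \<times> int"
  obtain z j where p: "p = (z, j)" by force
  show "Sstar T (point_vec c (x, m)) p = point_vec (c * complex_of_real (1 / sqrt (L0one T (T x)))) (T x, m - 1) p"
  proof (cases "finite {y. T y = z}")
    case True
    have "(\<Sum>y | T y = z. point_vec c (x, m) (y, j + 1)) = (\<Sum>y | T y = z. if y = x then (if j + 1 = m then c else 0) else 0)"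
      by (rule sum.cong) (auto simp: point_vec_def)
    also have "\<dots> = (if T x = z \<and> j + 1 = m then c else 0)"
      using True by (simp add: sum.delta')
    finally show ?thesis by (auto simp: p Sstar_def point_vec_def)
  next
    case False
    then have "L0one T z = 0" by (simp add: L0one_def)
    with False show ?thesis by (auto simp: p Sstar_def point_vec_def)
  qed
qed

lemma Sstar_pow_point_vec:
  "(Sstar T ^^ l) (point_vec c (x, m)) =
     point_vec (c * complex_of_real (1 / sqrt (Ik T l x))) ((T ^^ l) x, m - int l)"
proof (induction l arbitrary: c)
  case 0
  then show ?case by (simp add: Ik_def)
next
  case (Suc l)
  have "(Sstar T ^^ Suc l) (point_vec c (x, m)) =
      point_vec (c * complex_of_real (1 / sqrt (Ik T l x)) * complex_of_real (1 / sqrt (L0one T ((T ^^ Suc l) x))))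
        ((T ^^ Suc l) x, m - int l - 1)"
    by (simp add: Suc Sstar_point_vec)
  then show ?case by (simp add: Ik_Suc real_sqrt_mult algebra_simps)
qed

lemma Sop_pow_point_vec:
  "(Sop T ^^ k) (point_vec c (z, j)) (y, n) =
     (if (T ^^ k) y = z \<and> n = j + int k then c * complex_of_real (1 / sqrt (Ik T k y)) else 0)"
proof (induction k arbitrary: y n)
  case 0
  then show ?case by (simp add: Ik_def point_vec_def)
next
  case (Suc k)
  have "(Sop T ^^ Suc k) (point_vec c (z, j)) (y, n) =
      complex_of_real (1 / sqrt (L0one T (T y))) * (Sop T ^^ k) (point_vec c (z, j)) (T y, n - 1)"
    by (simp add: Sop_def)
  then show ?case by (simp add: Suc Ik_Suc_shift real_sqrt_mult funpow_swap1 algebra_simps)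
qed

fun mono_kernel :: "('a \<Rightarrow> 'a) \<Rightarrow> 'a monomial \<Rightarrow> 'a \<times> 'a \<Rightarrow> complex" where
  "mono_kernel T (Monomial f k l g) (x, y) =
     f y * g x * complex_of_real (1 / sqrt (Ik T l x)) * complex_of_real (1 / sqrt (Ik T k y))"

lemma mono_op_basis_vec:
  "mono_op T M (basis_vec (x, m)) (y, n) =
     (if int (s_deg M) + m = int (sstar_deg M) + n \<and> (T ^^ sstar_deg M) x = (T ^^ s_deg M) y
      then mono_kernel T M (x, y) else 0)"
proof (cases M)
  case (Monomial f k l g)
  show ?thesis
    by (simp add: Monomial basis_vec_eq_point_vec Mop_point_vec Sstar_pow_point_vec Sop_pow_point_vec)
      (auto simp: Mop_def Sop_pow_point_vec)
qed

lemma mono_kernel_diag: "mono_kernel T (Monomial f k k g) (x, x) = f x * g x / complex_of_real (Ik T k x)"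
proof -
  have "complex_of_real (1 / sqrt (Ik T k x)) * complex_of_real (1 / sqrt (Ik T k x)) = 1 / complex_of_real (Ik T k x)"
    using Ik_nonneg[of T k x] by (simp flip: of_real_mult add: real_sqrt_mult[symmetric])
  then show ?thesis by (simp add: mult.assoc)
qed

lemma continuous_on_mono_kernel:
  fixes T :: "'a::topological_space \<Rightarrow> 'a"
  assumes T: "covering_map T" and M: "mono_continuous M"
  shows "continuous_on UNIV (mono_kernel T M)"
proof (cases M)
  case (Monomial f k l g)
  define r where "r j x = complex_of_real (1 / sqrt (Ik T j x))" for j x
  have "continuous_on UNIV (r j)" for j
    unfolding r_def by (rule locally_const_continuous[OF locally_const_compose[OF locally_const_Ik[OF T]]])
  moreover have "continuous_on UNIV f" "continuous_on UNIV g" using M by (simp_all add: Monomial)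
  moreover have "continuous_on UNIV (\<lambda>z. h (fst z))" "continuous_on UNIV (\<lambda>z. h (snd z))"
    if "continuous_on UNIV h" for h :: "'a \<Rightarrow> complex"
    by (rule continuous_on_compose2[OF that continuous_on_fst[OF continuous_on_id]], simp,
        rule continuous_on_compose2[OF that continuous_on_snd[OF continuous_on_id]], simp)
  ultimately have "continuous_on UNIV (\<lambda>z. f (snd z) * g (fst z) * r l (fst z) * r k (snd z))"
    by (intro continuous_intros) auto
  moreover have "mono_kernel T M = (\<lambda>z. f (snd z) * g (fst z) * r l (fst z) * r k (snd z))"
    by (auto simp: Monomial r_def)
  ultimately show ?thesis by simp
qed

subsection \<open>The conditional expectation on the diagonal\<close>

lemma alg0_subset_crossed: "a \<in> alg0 T \<Longrightarrow> a \<in> crossed T"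
  unfolding crossed_def op_close_def
  by (auto simp: ell2_def l2norm_def intro!: bexI[of _ a] mult_nonneg_nonneg infsum_nonneg)

lemma cond_exp_add:
  "is_cond_exp T G \<Longrightarrow> a \<in> crossed T \<Longrightarrow> b \<in> crossed T \<Longrightarrow> G (\<lambda>v p. a v p + b v p) = (\<lambda>x. G a x + G b x)"
  unfolding is_cond_exp_def by blast

lemma cond_exp_scale: "is_cond_exp T G \<Longrightarrow> a \<in> crossed T \<Longrightarrow> G (\<lambda>v p. c * a v p) = (\<lambda>x. c * G a x)"
  unfolding is_cond_exp_def by blast

lemma cond_exp_close:
  "is_cond_exp T G \<Longrightarrow> a \<in> crossed T \<Longrightarrow> b \<in> crossed T \<Longrightarrow> op_close a b e \<Longrightarrow> e \<ge> 0 \<Longrightarrow>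
    cmod (G a x - G b x) \<le> e"
  unfolding is_cond_exp_def by blast

lemma cond_exp_continuous: "is_cond_exp T G \<Longrightarrow> b \<in> crossed T \<Longrightarrow> continuous_on UNIV (G b)"
  unfolding is_cond_exp_def by blast

lemma cond_exp_mono_op:
  assumes "is_cond_exp T G" "mono_continuous M"
  shows "G (mono_op T M) x = mono_op T M (basis_vec (x, n)) (x, n)"
proof (cases M)
  case (Monomial f k l g)
  then have "G (mono_op T M) x = (if k = l then f x * g x / complex_of_real (Ik T k x) else 0)"
    using assms unfolding is_cond_exp_def by simp
  moreover have "mono_op T M (basis_vec (x, n)) (x, n) = (if k = l then mono_kernel T M (x, x) else 0)"
    unfolding mono_op_basis_vec by (simp add: Monomial)
  moreover have "k = l \<Longrightarrow> mono_kernel T M (x, x) = f x * g x / complex_of_real (Ik T k x)"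
    by (simp only: Monomial mono_kernel_diag)
  ultimately show ?thesis by (cases "k = l") simp_all
qed

lemma cond_exp_mono_sum:
  assumes "is_cond_exp T G" "\<forall>M\<in>set Ms. mono_continuous M"
  shows "G (mono_sum T Ms) x = mono_sum T Ms (basis_vec (x, n)) (x, n)"
  using assms(2)
proof (induction Ms)
  case Nil
  have "mono_sum T [] = (\<lambda>v p. 0 * Sop T v p)" by (simp add: mono_sum_def)
  then show ?case
    using cond_exp_scale[OF assms(1) alg0_subset_crossed[OF alg0.S], of 0] by (simp add: mono_sum_def)
next
  case (Cons M Ms)
  have "mono_sum T (M # Ms) = (\<lambda>v p. mono_op T M v p + mono_sum T Ms v p)" by (simp add: mono_sum_def)
  then show ?case
    using Cons cond_exp_add[OF assms(1)] cond_exp_mono_op[OF assms(1)]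
    by (simp add: alg0_subset_crossed mono_op_alg0 mono_sum_alg0)
qed

lemma diag_coeff_alg0:
  fixes T :: "'a::topological_space \<Rightarrow> 'a"
  assumes "covering_map T" "is_cond_exp T G" "a \<in> alg0 T"
  shows "a (basis_vec (x, n)) (x, n) = G a x"
  using alg0_normal_form[OF assms(1,3)] cond_exp_mono_sum[OF assms(2)] by metis

lemma diag_coeff_crossed:
  fixes T :: "'a::topological_space \<Rightarrow> 'a"
  assumes T: "covering_map T" and G: "is_cond_exp T G" and b: "b \<in> crossed T"
  shows "b (basis_vec (x, n)) (x, n) = G b x"
proof (rule zero_if_norm_le_epsilon[where C = 2, THEN eq_iff_diff_eq_0[THEN iffD2]])
  fix e :: real assume "e > 0"
  then obtain a where a: "a \<in> alg0 T" "op_close b a e" using b unfolding crossed_def by blast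
  have "cmod (b (basis_vec (x, n)) (x, n) - a (basis_vec (x, n)) (x, n)) \<le> e"
    by (rule op_close_basis_vec[OF a(2)])
  moreover have "cmod (G b x - G a x) \<le> e"
    using cond_exp_close[OF G b alg0_subset_crossed[OF a(1)] a(2)] \<open>e > 0\<close> by simp
  moreover have "a (basis_vec (x, n)) (x, n) = G a x" by (rule diag_coeff_alg0[OF T G a(1)])
  ultimately show "cmod (b (basis_vec (x, n)) (x, n) - G b x) \<le> 2 * e"
    using norm_triangle_ineq4[of "b (basis_vec (x, n)) (x, n) - a (basis_vec (x, n)) (x, n)" "G b x - G a x"]
    by simp
qed

subsection \<open>Operators that are diagonal in the basis\<close>

definition finitely_determined :: "'a op \<Rightarrow> bool" where
  "finitely_determined a \<longleftrightarrow>
     (\<forall>p. \<exists>F. finite F \<and> (\<forall>v w. (\<forall>q\<in>F. v q = w q) \<longrightarrow> a v p = a w p))"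

lemma finitely_determined_Mop: "finitely_determined (Mop f)"
  unfolding finitely_determined_def
proof
  fix p :: "'a \<times> int"
  show "\<exists>F. finite F \<and> (\<forall>v w. (\<forall>q\<in>F. v q = w q) \<longrightarrow> Mop f v p = Mop f w p)"
    by (intro exI[of _ "{p}"]) (simp add: Mop_def)
qed

lemma finitely_determined_Sop: "finitely_determined (Sop T)"
  unfolding finitely_determined_def
proof
  fix p :: "'a \<times> int"
  show "\<exists>F. finite F \<and> (\<forall>v w. (\<forall>q\<in>F. v q = w q) \<longrightarrow> Sop T v p = Sop T w p)"
    by (intro exI[of _ "{(T (fst p), snd p - 1)}"]) (simp add: Sop_def)
qed

lemma finitely_determined_Sstar: "finitely_determined (Sstar T)"
  unfolding finitely_determined_def
proof
  fix p :: "'a \<times> int"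
  let ?F = "(\<lambda>y. (y, snd p + 1)) ` {y. T y = fst p}"
  show "\<exists>F. finite F \<and> (\<forall>v w. (\<forall>q\<in>F. v q = w q) \<longrightarrow> Sstar T v p = Sstar T w p)"
  proof (cases "finite {y. T y = fst p}")
    case True
    then show ?thesis by (intro exI[of _ ?F]) (auto simp: Sstar_def intro!: sum.cong)
  qed (auto simp: Sstar_def)
qed

lemma finitely_determined_combine:
  assumes "finitely_determined a" "finitely_determined b"
  shows "finitely_determined (\<lambda>v p. \<phi> (a v p) (b v p))"
  unfolding finitely_determined_def
proof
  fix p :: "'a \<times> int"
  obtain Fa where Fa: "finite Fa" "\<forall>v w. (\<forall>q\<in>Fa. v q = w q) \<longrightarrow> a v p = a w p"
    using assms(1) unfolding finitely_determined_def by blast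
  obtain Fb where Fb: "finite Fb" "\<forall>v w. (\<forall>q\<in>Fb. v q = w q) \<longrightarrow> b v p = b w p"
    using assms(2) unfolding finitely_determined_def by blast
  show "\<exists>F. finite F \<and> (\<forall>v w. (\<forall>q\<in>F. v q = w q) \<longrightarrow> \<phi> (a v p) (b v p) = \<phi> (a w p) (b w p))"
  proof (intro exI[of _ "Fa \<union> Fb"] conjI allI impI)
    show "finite (Fa \<union> Fb)" using Fa(1) Fb(1) by simp
    fix v w :: "'a \<times> int \<Rightarrow> complex"
    assume "\<forall>q\<in>Fa \<union> Fb. v q = w q"
    then have "a v p = a w p" "b v p = b w p" using Fa(2) Fb(2) by blast+
    then show "\<phi> (a v p) (b v p) = \<phi> (a w p) (b w p)" by simp
  qed
qed

lemma finitely_determined_comp: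
  assumes "finitely_determined a" "finitely_determined b"
  shows "finitely_determined (a \<circ> b)"
  unfolding finitely_determined_def
proof
  fix p :: "'a \<times> int"
  obtain Fa where Fa: "finite Fa" "\<forall>v w. (\<forall>q\<in>Fa. v q = w q) \<longrightarrow> a v p = a w p"
    using assms(1) unfolding finitely_determined_def by blast
  obtain Fb where Fb: "\<forall>q. finite (Fb q) \<and> (\<forall>v w. (\<forall>r\<in>Fb q. v r = w r) \<longrightarrow> b v q = b w q)"
    using assms(2) choice[of "\<lambda>q F. finite F \<and> (\<forall>v w. (\<forall>r\<in>F. v r = w r) \<longrightarrow> b v q = b w q)"]
    unfolding finitely_determined_def by blast
  show "\<exists>F. finite F \<and> (\<forall>v w. (\<forall>q\<in>F. v q = w q) \<longrightarrow> (a \<circ> b) v p = (a \<circ> b) w p)"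
  proof (intro exI conjI allI impI)
    show "finite (\<Union>q\<in>Fa. Fb q)" using Fa(1) Fb by blast
    fix v w :: "'a \<times> int \<Rightarrow> complex"
    assume "\<forall>r\<in>\<Union>q\<in>Fa. Fb q. v r = w r"
    then have "\<forall>q\<in>Fa. b v q = b w q" using Fb by blast
    then show "(a \<circ> b) v p = (a \<circ> b) w p" using Fa(2) by simp
  qed
qed

lemma finitely_determined_alg0: "a \<in> alg0 T \<Longrightarrow> finitely_determined a"
proof (induction rule: alg0.induct)
  case (add a b)
  then show ?case using finitely_determined_combine[of a b "(+)"] by simp
next
  case (scale a c)
  then show ?case using finitely_determined_combine[of a a "\<lambda>x _. c * x"] by simp
qed (simp_all add: finitely_determined_Mop finitely_determined_Sop finitely_determined_Sstar
    finitely_determined_comp[unfolded comp_def])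

text \<open>Norm limits of operators in \<open>alg0\<close> still act on finitely supported vectors through their
  matrix coefficients, although they need not be finitely determined themselves.\<close>

lemma crossed_apply_restrict0:
  assumes "b \<in> crossed T" "finite S" "v \<in> ell2"
  shows "b (restrict0 S v) p = (\<Sum>q\<in>S. v q * b (basis_vec q) p)"
proof (rule zero_if_norm_le_epsilon[THEN eq_iff_diff_eq_0[THEN iffD2]])
  fix e :: real assume "e > 0"
  then obtain a where a: "a \<in> alg0 T" "op_close b a e" using assms(1) unfolding crossed_def by blast
  have "cmod (b (restrict0 S v) p - a (restrict0 S v) p) \<le> e * l2norm (restrict0 S v)"
    by (rule op_close_apply[OF a(2) restrict0_ell2(1)[OF assms(3)]])
  moreover have "a (restrict0 S v) p = (\<Sum>q\<in>S. v q * a (basis_vec q) p)"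
    by (rule linear_op_restrict0[OF linear_op_alg0[OF a(1)] assms(2)])
  moreover have "cmod (\<Sum>q\<in>S. v q * (a (basis_vec q) p - b (basis_vec q) p)) \<le> (\<Sum>q\<in>S. cmod (v q)) * e"
  proof -
    have "cmod (\<Sum>q\<in>S. v q * (a (basis_vec q) p - b (basis_vec q) p))
        \<le> (\<Sum>q\<in>S. cmod (v q) * cmod (a (basis_vec q) p - b (basis_vec q) p))"
      using norm_sum[of "\<lambda>q. v q * (a (basis_vec q) p - b (basis_vec q) p)" S] by (simp add: norm_mult)
    also have "\<dots> \<le> (\<Sum>q\<in>S. cmod (v q) * e)"
      using op_close_basis_vec[OF a(2)] by (intro sum_mono mult_left_mono) (simp_all add: norm_minus_commute)
    finally show ?thesis by (simp add: sum_distrib_right)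
  qed
  ultimately show "cmod (b (restrict0 S v) p - (\<Sum>q\<in>S. v q * b (basis_vec q) p))
      \<le> (l2norm (restrict0 S v) + (\<Sum>q\<in>S. cmod (v q))) * e"
    using norm_triangle_ineq[of "b (restrict0 S v) p - a (restrict0 S v) p"
        "\<Sum>q\<in>S. v q * (a (basis_vec q) p - b (basis_vec q) p)"]
    by (simp add: sum_subtractf right_diff_distrib algebra_simps)
qed

lemma crossed_eq_Mop_if_diagonal:
  fixes T :: "'a::topological_space \<Rightarrow> 'a"
  assumes T: "covering_map T" and G: "is_cond_exp T G" and b: "b \<in> crossed T"
    and diag: "\<And>q p. q \<noteq> p \<Longrightarrow> b (basis_vec q) p = 0"
    and v: "v \<in> ell2"
  shows "b v = Mop (G b) v"
proof
  fix p :: "'a \<times> int"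
  show "b v p = Mop (G b) v p"
  proof (rule zero_if_norm_le_epsilon[where C = "2 * l2norm v", THEN eq_iff_diff_eq_0[THEN iffD2]])
    fix e :: real assume "e > 0"
    then obtain a where a: "a \<in> alg0 T" "op_close b a e" using b unfolding crossed_def by blast
    obtain F where F: "finite F" "\<And>v w. \<forall>q\<in>F. v q = w q \<Longrightarrow> a v p = a w p"
      using finitely_determined_alg0[OF a(1)] unfolding finitely_determined_def by blast
    define S where "S = insert p F"
    have "finite S" "p \<in> S" using F(1) by (simp_all add: S_def)
    have a_v: "a v p = a (restrict0 S v) p" by (rule F(2)) (simp add: restrict0_def S_def)
    have b_restrict: "b (restrict0 S v) p = G b (fst p) * v p"
    proof -
      have "b (restrict0 S v) p = (\<Sum>q\<in>S. v q * b (basis_vec q) p)"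
        by (rule crossed_apply_restrict0[OF b \<open>finite S\<close> v])
      also have "\<dots> = v p * b (basis_vec p) p"
        using \<open>finite S\<close> \<open>p \<in> S\<close> diag by (simp add: sum.remove)
      also have "b (basis_vec p) p = G b (fst p)"
        using diag_coeff_crossed[OF T G b, of "fst p" "snd p"] by simp
      finally show ?thesis by simp
    qed
    have "cmod (b (restrict0 S v) p - a (restrict0 S v) p) \<le> e * l2norm (restrict0 S v)"
      by (rule op_close_apply[OF a(2) restrict0_ell2(1)[OF v]])
    also have "\<dots> \<le> e * l2norm v"
      using restrict0_ell2(2)[OF v] \<open>e > 0\<close> by (simp add: mult_left_mono)
    finally have "cmod (a v p - G b (fst p) * v p) \<le> e * l2norm v"
      by (simp add: a_v b_restrict norm_minus_commute)
    moreover have "cmod (b v p - a v p) \<le> e * l2norm v" by (rule op_close_apply[OF a(2) v])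
    ultimately show "cmod (b v p - Mop (G b) v p) \<le> 2 * l2norm v * e"
      using norm_triangle_ineq[of "b v p - a v p" "a v p - G b (fst p) * v p"]
      by (simp add: Mop_def mult.commute[of e])
  qed
qed

lemma crossed_in_C_iff_diagonal:
  fixes T :: "'a::topological_space \<Rightarrow> 'a"
  assumes T: "covering_map T" and G: "is_cond_exp T G" and b: "b \<in> crossed T"
  shows "(\<exists>f. continuous_on UNIV f \<and> (\<forall>v\<in>ell2. b v = Mop f v)) \<longleftrightarrow>
         (\<forall>x m y n. (x, m) \<noteq> (y, n) \<longrightarrow> b (basis_vec (x, m)) (y, n) = 0)"
proof
  assume "\<exists>f. continuous_on UNIV f \<and> (\<forall>v\<in>ell2. b v = Mop f v)"
  then obtain f where f: "\<forall>v\<in>ell2. b v = Mop f v" by blast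
  show "\<forall>x m y n. (x, m) \<noteq> (y, n) \<longrightarrow> b (basis_vec (x, m)) (y, n) = 0"
  proof (intro allI impI)
    fix x m y n assume "(x, m) \<noteq> ((y::'a), (n::int))"
    moreover have "b (basis_vec (x, m)) = Mop f (basis_vec (x, m))" using f basis_vec_ell2 by blast
    ultimately show "b (basis_vec (x, m)) (y, n) = 0" by (auto simp: Mop_def basis_vec_def)
  qed
next
  assume "\<forall>x m y n. (x, m) \<noteq> (y, n) \<longrightarrow> b (basis_vec (x, m)) (y, n) = 0"
  then have "\<And>q p. q \<noteq> p \<Longrightarrow> b (basis_vec q) p = 0" by auto
  then show "\<exists>f. continuous_on UNIV f \<and> (\<forall>v\<in>ell2. b v = Mop f v)"
    using crossed_eq_Mop_if_diagonal[OF T G b] cond_exp_continuous[OF G b] by blast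
qed

subsection \<open>Off-diagonal coefficients\<close>

lemma continuous_on_sum_list:
  "(\<And>i. i \<in> set xs \<Longrightarrow> continuous_on S (f i)) \<Longrightarrow> continuous_on S (\<lambda>z. \<Sum>i\<leftarrow>xs. f i z :: 'b::topological_monoid_add)"
  by (induction xs) (auto intro: continuous_intros)

text \<open>Among the monomials contributing at \<open>(x, y)\<close> take one with the least power \<open>k\<close> of \<open>S\<close>.
  On the set where \<open>T\<^sup>l x' = T\<^sup>k y'\<close>, all monomials with larger \<open>k\<close> (and the same index shift)
  contribute as well, while those with smaller \<open>k\<close> do not contribute near \<open>(x, y)\<close> at all,
  by the Hausdorff property.\<close>

lemma mono_sum_coeff_locally_continuous:
  fixes T :: "'a::t2_space \<Rightarrow> 'a"
  assumes T: "covering_map T" and Ms: "\<forall>M\<in>set Ms. mono_continuous M"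
    and nz: "mono_sum T Ms (basis_vec (x, m)) (y, n) \<noteq> 0"
  obtains k l W h where "int k + m = int l + n" "(T ^^ l) x = (T ^^ k) y"
    and "open W" "(x, y) \<in> W" "continuous_on UNIV h"
    and "\<And>x' y'. (x', y') \<in> W \<Longrightarrow> (T ^^ l) x' = (T ^^ k) y' \<Longrightarrow>
           mono_sum T Ms (basis_vec (x', m)) (y', n) = h (x', y')"
proof -
  define shift_ok where "shift_ok M \<longleftrightarrow> int (s_deg M) + m = int (sstar_deg M) + n" for M :: "'a monomial"
  define meets where "meets M x' y' \<longleftrightarrow> (T ^^ sstar_deg M) x' = (T ^^ s_deg M) y'" for M :: "'a monomial" and x' y'
  have coeff: "mono_sum T Ms (basis_vec (x', m)) (y', n) =
      (\<Sum>M\<leftarrow>Ms. if shift_ok M \<and> meets M x' y' then mono_kernel T M (x', y') else 0)" for x' y'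
    by (simp add: mono_sum_def mono_op_basis_vec shift_ok_def meets_def)
  define A where "A = {M \<in> set Ms. shift_ok M \<and> meets M x y}"
  have "A \<noteq> {}"
  proof
    assume "A = {}"
    then have "mono_sum T Ms (basis_vec (x, m)) (y, n) = (\<Sum>M\<leftarrow>Ms. 0)"
      unfolding coeff A_def by (intro arg_cong[of _ _ sum_list] map_cong) auto
    with nz show False by simp
  qed
  moreover have "finite A" by (simp add: A_def)
  ultimately have "Min (s_deg ` A) \<in> s_deg ` A" by (intro Min_in) auto
  then obtain M0 where M0: "M0 \<in> A" "s_deg M0 = Min (s_deg ` A)" by force
  define k where "k = s_deg M0"
  define l where "l = sstar_deg M0"
  have k_min: "k \<le> s_deg M" if "M \<in> A" for M
    using M0(2) \<open>finite A\<close> that by (simp add: k_def)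
  have shift: "int k + m = int l + n" and meet: "(T ^^ l) x = (T ^^ k) y"
    using M0(1) by (simp_all add: A_def shift_ok_def meets_def k_def l_def)
  define B where "B = {M \<in> set Ms. shift_ok M \<and> s_deg M < k}"
  define W where "W = (\<Inter>M\<in>B. {z. (T ^^ sstar_deg M) (fst z) \<noteq> (T ^^ s_deg M) (snd z)})"
  have cont_pow: "continuous_on UNIV (\<lambda>z. (T ^^ j) (f z))" if "continuous_on UNIV f" for j f
    using continuous_on_compose2[OF covering_map_continuous_funpow[OF T] that] by simp
  have "open {z. (T ^^ i) (fst z) \<noteq> (T ^^ j) (snd z)}" for i j
    by (intro open_Collect_neq cont_pow continuous_on_fst continuous_on_snd continuous_on_id)
  then have "open W" unfolding W_def B_def by (intro open_INT) auto
  moreover have "(x, y) \<in> W"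
    using k_min by (force simp: W_def B_def A_def meets_def)
  moreover define h where "h z = (\<Sum>M\<leftarrow>filter (\<lambda>M. shift_ok M \<and> k \<le> s_deg M) Ms. mono_kernel T M z)" for z
  moreover have "continuous_on UNIV h"
    unfolding h_def using Ms by (intro continuous_on_sum_list continuous_on_mono_kernel[OF T]) auto
  moreover have "mono_sum T Ms (basis_vec (x', m)) (y', n) = h (x', y')"
    if W: "(x', y') \<in> W" and meet': "(T ^^ l) x' = (T ^^ k) y'" for x' y'
  proof -
    have "(shift_ok M \<and> meets M x' y') = (shift_ok M \<and> k \<le> s_deg M)" if "M \<in> set Ms" for M
    proof (cases "shift_ok M \<and> k \<le> s_deg M")
      case True
      then have "sstar_deg M = (s_deg M - k) + l" "s_deg M = (s_deg M - k) + k"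
        using shift by (auto simp: shift_ok_def)
      then have "meets M x' y'"
        using meet' unfolding meets_def by (metis funpow_add comp_apply)
      with True show ?thesis by simp
    next
      case False
      then have "shift_ok M \<Longrightarrow> M \<in> B" using that by (auto simp: B_def)
      then show ?thesis using False W by (auto simp: W_def meets_def)
    qed
    then show ?thesis
      unfolding coeff h_def sum_list_map_filter' by (intro arg_cong[of _ _ sum_list] map_cong) auto
  qed
  ultimately show thesis using that[OF shift meet] by blast
qed

lemma crossed_coeff_nonzero_nearby:
  fixes T :: "'a::t2_space \<Rightarrow> 'a"
  assumes T: "covering_map T" and b: "b \<in> crossed T" and nz: "b (basis_vec (x, m)) (y, n) \<noteq> 0"
  shows "\<exists>k l. int k + m = int l + n \<and> (T ^^ l) x = (T ^^ k) y \<and>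
            (\<exists>U V. open U \<and> x \<in> U \<and> open V \<and> y \<in> V \<and>
               (\<forall>x'\<in>U. \<forall>y'\<in>V. (T ^^ l) x' = (T ^^ k) y' \<longrightarrow>
                  b (basis_vec (x', m)) (y', n) \<noteq> 0))"
proof -
  define e where "e = cmod (b (basis_vec (x, m)) (y, n)) / 4"
  have "e > 0" using nz by (simp add: e_def)
  then obtain a where a: "a \<in> alg0 T" "op_close b a e" using b unfolding crossed_def by blast
  obtain Ms where Ms: "\<forall>M\<in>set Ms. mono_continuous M" "a = mono_sum T Ms"
    using alg0_normal_form[OF T a(1)] by blast
  have close: "cmod (b (basis_vec (x', m)) (y', n) - a (basis_vec (x', m)) (y', n)) \<le> e" for x' y'
    by (rule op_close_basis_vec[OF a(2)])
  have "3 * e \<le> cmod (a (basis_vec (x, m)) (y, n))"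
    using close[of x y] norm_triangle_ineq2[of "b (basis_vec (x, m)) (y, n)" "a (basis_vec (x, m)) (y, n)"]
    by (simp add: e_def)
  then have "mono_sum T Ms (basis_vec (x, m)) (y, n) \<noteq> 0" using \<open>e > 0\<close> Ms(2) by auto
  then obtain k l W h where kl: "int k + m = int l + n" "(T ^^ l) x = (T ^^ k) y"
    and W: "open W" "(x, y) \<in> W" and h: "continuous_on UNIV h"
    and a_eq_h: "\<And>x' y'. (x', y') \<in> W \<Longrightarrow> (T ^^ l) x' = (T ^^ k) y' \<Longrightarrow>
                   a (basis_vec (x', m)) (y', n) = h (x', y')"
    using mono_sum_coeff_locally_continuous[OF T Ms(1)] Ms(2) by metis
  define N where "N = W \<inter> {z. 2 * e < cmod (h z)}"
  have "open N"
    unfolding N_def using W(1) h by (intro open_Int open_Collect_less continuous_intros) auto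
  moreover have "(x, y) \<in> N"
    using W(2) a_eq_h[OF W(2) kl(2)] \<open>3 * e \<le> _\<close> \<open>e > 0\<close> by (simp add: N_def)
  ultimately obtain U V where UV: "open U" "open V" "(x, y) \<in> U \<times> V" "U \<times> V \<subseteq> N"
    by (rule open_prod_elim)
  have "b (basis_vec (x', m)) (y', n) \<noteq> 0"
    if "x' \<in> U" "y' \<in> V" "(T ^^ l) x' = (T ^^ k) y'" for x' y'
  proof -
    have "(x', y') \<in> N" using UV(4) that(1,2) by blast
    then have "2 * e < cmod (a (basis_vec (x', m)) (y', n))"
      using a_eq_h that(3) by (simp add: N_def)
    then show ?thesis
      using close[of x' y'] norm_triangle_ineq2[of "a (basis_vec (x', m)) (y', n)" "b (basis_vec (x', m)) (y', n)"]
        \<open>e > 0\<close> by (auto simp: norm_minus_commute)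
  qed
  then show ?thesis using kl UV(1,2,3) by blast
qed

theorem lemma3p3:
  fixes T :: "'a::t2_space \<Rightarrow> 'a"
    and G :: "'a op \<Rightarrow> 'a \<Rightarrow> complex"
    and b :: "'a op"
  assumes "compact (UNIV :: 'a set)"
    and "covering_map T"
    and "is_cond_exp T G"
    and "b \<in> crossed T"
  shows "(\<forall>x n. b (basis_vec (x, n)) (x, n) = G b x)
    \<and> ((\<exists>f. continuous_on UNIV f \<and> (\<forall>v\<in>ell2. b v = Mop f v)) \<longleftrightarrow>
         (\<forall>x m y n. (x, m) \<noteq> (y, n) \<longrightarrow> b (basis_vec (x, m)) (y, n) = 0))
    \<and> (\<forall>x m y n. b (basis_vec (x, m)) (y, n) \<noteq> 0 \<longrightarrow>
         (\<exists>k l. int k + m = int l + n \<and> (T ^^ l) x = (T ^^ k) y \<and>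
            (\<exists>U V. open U \<and> x \<in> U \<and> open V \<and> y \<in> V \<and>
               (\<forall>x'\<in>U. \<forall>y'\<in>V. (T ^^ l) x' = (T ^^ k) y' \<longrightarrow>
                  b (basis_vec (x', m)) (y', n) \<noteq> 0))))"
  using diag_coeff_crossed[OF assms(2-4)] crossed_in_C_iff_diagonal[OF assms(2-4)]
    crossed_coeff_nonzero_nearby[OF assms(2,4)]
  by blast

end
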